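(* Let $f:\{0,\tfrac12,1\}^V\to\mathbb{R}$ be a bisubmodular function and let $\mathcal{A}\subseteq\{0,\tfrac12,1\}^V$ be its set of minimising assignments. Then the set $\mathcal{A}\cap\{0,1\}^V$ of integral global minimisers of $f$ can be modelled as the set of solutions to a (crisp) 2-CNF formula on $V$.
   Context: The operations $\sqcap,\sqcup$ on $\{0,\tfrac12,1\}$ are: $x\sqcap x=x\sqcup x=x$; $0\sqcap1=0\sqcup1=\tfrac12$; for $a\in\{0,1\}$, $a\sqcap\tfrac12=\tfrac12$ and $a\sqcup\tfrac12=a$ (and symmetrically). $f$ is bisubmodular if $f(A)+f(B)\ge f(A\sqcap B)+f(A\sqcup B)$ for all $A,B\in\{0,\tfrac12,1\}^V$, operations coordinatewise. *)

theory Defs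
  imports Complex_Main
begin

text \<open>The three-element domain {0, 1/2, 1}.\<close>
datatype tri = T0 | Th | T1

fun tmeet :: "tri \<Rightarrow> tri \<Rightarrow> tri" where
  "tmeet T0 T0 = T0"
| "tmeet T1 T1 = T1"
| "tmeet _ _ = Th"

fun tjoin :: "tri \<Rightarrow> tri \<Rightarrow> tri" where
  "tjoin T0 T0 = T0"
| "tjoin T1 T1 = T1"
| "tjoin T0 T1 = Th"
| "tjoin T1 T0 = Th"
| "tjoin Th y = y"
| "tjoin x Th = x"

definition bisubmodular :: "(('v \<Rightarrow> tri) \<Rightarrow> real) \<Rightarrow> bool" where
  "bisubmodular f \<longleftrightarrow>
     (\<forall>A B. f A + f B \<ge> f (\<lambda>v. tmeet (A v) (B v)) + f (\<lambda>v. tjoin (A v) (B v)))"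

definition minimisers :: "(('v \<Rightarrow> tri) \<Rightarrow> real) \<Rightarrow> ('v \<Rightarrow> tri) set" where
  "minimisers f = {A. \<forall>B. f A \<le> f B}"

definition tri_of_bool :: "bool \<Rightarrow> tri" where
  "tri_of_bool b = (if b then T1 else T0)"

text \<open>A literal is a pair (variable, polarity); a clause is a set of literals;
  a 2-CNF formula is a set of clauses each with at most two literals.\<close>
definition sat_clause :: "('v \<Rightarrow> bool) \<Rightarrow> ('v \<times> bool) set \<Rightarrow> bool" where
  "sat_clause \<sigma> C \<longleftrightarrow> (\<exists>(x, b) \<in> C. \<sigma> x = b)"

definition is_2cnf :: "('v \<times> bool) set set \<Rightarrow> bool" where
  "is_2cnf F \<longleftrightarrow> finite F \<and> (\<forall>C\<in>F. finite C \<and> card C \<le> 2)"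

definition cnf_models :: "('v \<times> bool) set set \<Rightarrow> ('v \<Rightarrow> bool) set" where
  "cnf_models F = {\<sigma>. \<forall>C\<in>F. sat_clause \<sigma> C}"

end

theory Submission
  imports Defs
begin

text \<open>On integral assignments the join keeps agreeing coordinates and sends disagreeing ones
  to \<open>1/2\<close>, which is neutral for the join. Hence the nested join
  \<open>((a \<squnion> b) \<squnion> c) \<squnion> ((a \<squnion> c) \<squnion> b)\<close> computes the coordinatewise majority of three
  integral assignments. By bisubmodularity the minimisers are closed under join, so the
  integral minimisers form a Boolean relation closed under majority. A majority-closed
  relation is determined by its projections onto pairs of variables (Baker--Pixley): if
  \<open>\<sigma>\<close> agrees with some member on every set of at most two variables, then, dropping in turn
  three distinct variables of a larger set and taking the majority of the three members
  obtained inductively, it agrees with a member on every finite set. So the relation is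
  exactly the set of models of the 2-clauses it satisfies.\<close>

definition majority :: "bool \<Rightarrow> bool \<Rightarrow> bool \<Rightarrow> bool" where
  "majority a b c \<longleftrightarrow> (a \<and> b) \<or> (a \<and> c) \<or> (b \<and> c)"

definition majority_closed :: "('v \<Rightarrow> bool) set \<Rightarrow> bool" where
  "majority_closed S \<longleftrightarrow>
     (\<forall>a\<in>S. \<forall>b\<in>S. \<forall>c\<in>S. (\<lambda>v. majority (a v) (b v) (c v)) \<in> S)"

lemma majority_eq_if_two_eq:
  assumes "a = d \<and> b = d \<or> a = d \<and> c = d \<or> b = d \<and> c = d"
  shows "majority a b c = d"
  using assms unfolding majority_def by blast

lemma majority_closed_agree_on_finite:
  assumes closed: "majority_closed S" and "finite W"
    and pairs: "\<And>U. U \<subseteq> W \<Longrightarrow> card U \<le> 2 \<Longrightarrow> \<exists>\<tau>\<in>S. \<forall>x\<in>U. \<tau> x = \<sigma> x"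
  shows "\<exists>\<tau>\<in>S. \<forall>x\<in>W. \<tau> x = \<sigma> x"
  using \<open>finite W\<close> pairs
proof (induction W rule: finite_psubset_induct)
  case (psubset W)
  show ?case
  proof (cases "card W \<le> 2")
    case True
    then show ?thesis using psubset.prems by blast
  next
    case False
    then obtain T where "T \<subseteq> W" "card T = 3"
      using obtain_subset_with_card_n[of 3 W] by force
    moreover from \<open>card T = 3\<close> obtain x1 x2 x3 where "T = {x1, x2, x3}"
      and distinct: "x1 \<noteq> x2" "x2 \<noteq> x3" "x1 \<noteq> x3"
      unfolding card_3_iff by blast
    ultimately have x: "x1 \<in> W" "x2 \<in> W" "x3 \<in> W" by auto
    have agree_off: "\<exists>\<tau>\<in>S. \<forall>x\<in>W - {y}. \<tau> x = \<sigma> x" if "y \<in> W" for y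
    proof (rule psubset.IH)
      show "W - {y} \<subset> W" using that by blast
      show "\<exists>\<tau>\<in>S. \<forall>x\<in>U. \<tau> x = \<sigma> x" if "U \<subseteq> W - {y}" "card U \<le> 2" for U
        using that psubset.prems by blast
    qed
    obtain t1 t2 t3 where t: "t1 \<in> S" "t2 \<in> S" "t3 \<in> S"
      and t1: "\<forall>x\<in>W - {x1}. t1 x = \<sigma> x" and t2: "\<forall>x\<in>W - {x2}. t2 x = \<sigma> x"
      and t3: "\<forall>x\<in>W - {x3}. t3 x = \<sigma> x"
      using agree_off[OF x(1)] agree_off[OF x(2)] agree_off[OF x(3)] by blast
    have majority_agrees: "majority (t1 x) (t2 x) (t3 x) = \<sigma> x" if "x \<in> W" for x
    proof (rule majority_eq_if_two_eq)
      show "t1 x = \<sigma> x \<and> t2 x = \<sigma> x \<or> t1 x = \<sigma> x \<and> t3 x = \<sigma> x \<or> t2 x = \<sigma> x \<and> t3 x = \<sigma> x"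
        using that t1 t2 t3 distinct by (cases "x = x1"; cases "x = x2") auto
    qed
    have majority_in: "(\<lambda>v. majority (t1 v) (t2 v) (t3 v)) \<in> S"
      using closed t unfolding majority_closed_def by blast
    show ?thesis using majority_agrees by (intro bexI[OF _ majority_in]) simp
  qed
qed

text \<open>If no member of \<open>S\<close> agrees with \<open>\<sigma>\<close> on \<open>U\<close>, then the clause \<open>\<Or>x\<in>U. x \<noteq> \<sigma> x\<close>
  is valid in \<open>S\<close> but violated by \<open>\<sigma>\<close>.\<close>

lemma agree_on_if_sat_valid_2_clauses:
  assumes sat: "\<And>C. card C \<le> 2 \<Longrightarrow> \<forall>\<tau>\<in>S. sat_clause \<tau> C \<Longrightarrow> sat_clause \<sigma> C"
    and "card U \<le> 2"
  shows "\<exists>\<tau>\<in>S. \<forall>x\<in>U. \<tau> x = \<sigma> x"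
proof (rule ccontr)
  assume no_agree: "\<not> (\<exists>\<tau>\<in>S. \<forall>x\<in>U. \<tau> x = \<sigma> x)"
  define C where "C = (\<lambda>x. (x, \<not> \<sigma> x)) ` U"
  have "card C = card U"
    unfolding C_def by (rule card_image) (simp add: inj_on_def)
  moreover have "\<forall>\<tau>\<in>S. sat_clause \<tau> C"
    using no_agree unfolding C_def sat_clause_def by auto
  ultimately have "sat_clause \<sigma> C" using sat \<open>card U \<le> 2\<close> by simp
  then show False unfolding C_def sat_clause_def by auto
qed

lemma majority_closed_is_2cnf_models:
  fixes S :: "('v::finite \<Rightarrow> bool) set"
  assumes "majority_closed S"
  shows "\<exists>F. is_2cnf F \<and> cnf_models F = S"
proof -
  define F where "F = {C :: ('v \<times> bool) set. card C \<le> 2 \<and> (\<forall>\<tau>\<in>S. sat_clause \<tau> C)}"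
  have "cnf_models F \<subseteq> S"
  proof
    fix \<sigma> assume "\<sigma> \<in> cnf_models F"
    then have sat: "\<And>C. card C \<le> 2 \<Longrightarrow> \<forall>\<tau>\<in>S. sat_clause \<tau> C \<Longrightarrow> sat_clause \<sigma> C"
      unfolding cnf_models_def F_def by blast
    have "\<exists>\<tau>\<in>S. \<forall>x\<in>UNIV. \<tau> x = \<sigma> x"
      using assms finite_UNIV
      by (rule majority_closed_agree_on_finite) (rule agree_on_if_sat_valid_2_clauses[OF sat])
    then obtain \<tau> where "\<tau> \<in> S" and "\<forall>x. \<tau> x = \<sigma> x" by blast
    moreover from this(2) have "\<tau> = \<sigma>" by (simp add: fun_eq_iff)
    ultimately show "\<sigma> \<in> S" by simp
  qed
  moreover have "S \<subseteq> cnf_models F" unfolding cnf_models_def F_def by auto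
  moreover have "is_2cnf F" unfolding is_2cnf_def F_def by auto
  ultimately show ?thesis by blast
qed

lemma tjoin_minimisers:
  assumes "bisubmodular f" and A: "A \<in> minimisers f" and B: "B \<in> minimisers f"
  shows "(\<lambda>v. tjoin (A v) (B v)) \<in> minimisers f"
proof -
  have "f (\<lambda>v. tmeet (A v) (B v)) + f (\<lambda>v. tjoin (A v) (B v)) \<le> f A + f B"
    using \<open>bisubmodular f\<close> unfolding bisubmodular_def by blast
  moreover have "f A \<le> f (\<lambda>v. tmeet (A v) (B v))" using A unfolding minimisers_def by blast
  ultimately have "f (\<lambda>v. tjoin (A v) (B v)) \<le> f B" by simp
  then show ?thesis using B unfolding minimisers_def by (blast intro: order_trans)
qed

lemma tjoin_tri_of_bool_majority:
  "tjoin (tjoin (tjoin (tri_of_bool a) (tri_of_bool b)) (tri_of_bool c))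
         (tjoin (tjoin (tri_of_bool a) (tri_of_bool c)) (tri_of_bool b))
   = tri_of_bool (majority a b c)"
  by (cases a; cases b; cases c) (simp_all add: tri_of_bool_def majority_def)

lemma majority_closed_integral_minimisers:
  fixes f :: "('v \<Rightarrow> tri) \<Rightarrow> real"
  assumes "bisubmodular f"
  shows "majority_closed {\<sigma>. (\<lambda>v. tri_of_bool (\<sigma> v)) \<in> minimisers f}"
  unfolding majority_closed_def
proof (intro ballI)
  fix a b c :: "'v \<Rightarrow> bool"
  assume "a \<in> {\<sigma>. (\<lambda>v. tri_of_bool (\<sigma> v)) \<in> minimisers f}"
    and "b \<in> {\<sigma>. (\<lambda>v. tri_of_bool (\<sigma> v)) \<in> minimisers f}"
    and "c \<in> {\<sigma>. (\<lambda>v. tri_of_bool (\<sigma> v)) \<in> minimisers f}"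
  then have A: "(\<lambda>v. tri_of_bool (a v)) \<in> minimisers f"
    and B: "(\<lambda>v. tri_of_bool (b v)) \<in> minimisers f"
    and C: "(\<lambda>v. tri_of_bool (c v)) \<in> minimisers f" by auto
  note join = tjoin_minimisers[OF assms]
  have "(\<lambda>v. tjoin (tjoin (tjoin (tri_of_bool (a v)) (tri_of_bool (b v))) (tri_of_bool (c v)))
                   (tjoin (tjoin (tri_of_bool (a v)) (tri_of_bool (c v))) (tri_of_bool (b v))))
        \<in> minimisers f"
    using join[OF join[OF join[OF A B] C] join[OF join[OF A C] B]] by simp
  then show "(\<lambda>v. majority (a v) (b v) (c v)) \<in> {\<sigma>. (\<lambda>v. tri_of_bool (\<sigma> v)) \<in> minimisers f}"
    by (simp add: tjoin_tri_of_bool_majority)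
qed

theorem lemma23:
  fixes f :: "('v::finite \<Rightarrow> tri) \<Rightarrow> real"
  assumes "bisubmodular f"
  shows "\<exists>F. is_2cnf F \<and>
           cnf_models F = {\<sigma>. (\<lambda>v. tri_of_bool (\<sigma> v)) \<in> minimisers f}"
  using majority_closed_is_2cnf_models majority_closed_integral_minimisers[OF assms] .

end
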